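(* Let $G$ be a maximal triangle-free graph on $n$ vertices with chromatic number $k$ and maximum degree $d$, and let $v$ be a vertex of maximum degree. Let $G'$ be the subgraph of $G$ induced by $V(G)\setminus(N(v)\cup\{v\})$. Then $G'$ is a triangle-free graph on $n-d-1$ vertices with maximum degree at most $d-1$, and its chromatic number is $k-1$ or $k$.
   Context: All graphs are finite, simple and undirected. A graph is triangle-free if it has no cycle of length $3$. A maximal triangle-free (mtf) graph is a triangle-free graph such that adding any new edge between two non-adjacent vertices creates a triangle. $N(v)$ denotes the set of neighbours of $v$. *)

theory Defs
  imports Main
begin

text \<open>Subgraphs induced by W \<subseteq> V are represented by (W, E).\<close>

definition simple_graph :: "'a set \<Rightarrow> ('a \<Rightarrow> 'a \<Rightarrow> bool) \<Rightarrow> bool" where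
  "simple_graph V E \<longleftrightarrow> finite V \<and> (\<forall>x\<in>V. \<forall>y\<in>V. E x y \<longrightarrow> E y x) \<and> (\<forall>x\<in>V. \<not> E x x)"

definition neighbours :: "'a set \<Rightarrow> ('a \<Rightarrow> 'a \<Rightarrow> bool) \<Rightarrow> 'a \<Rightarrow> 'a set" where
  "neighbours V E v = {u \<in> V. E v u}"

definition degree :: "'a set \<Rightarrow> ('a \<Rightarrow> 'a \<Rightarrow> bool) \<Rightarrow> 'a \<Rightarrow> nat" where
  "degree V E v = card (neighbours V E v)"

definition max_degree :: "'a set \<Rightarrow> ('a \<Rightarrow> 'a \<Rightarrow> bool) \<Rightarrow> nat" where
  "max_degree V E = Max (insert 0 (degree V E ` V))"

definition triangle_free :: "'a set \<Rightarrow> ('a \<Rightarrow> 'a \<Rightarrow> bool) \<Rightarrow> bool" where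
  "triangle_free V E \<longleftrightarrow> \<not> (\<exists>x\<in>V. \<exists>y\<in>V. \<exists>z\<in>V. E x y \<and> E y z \<and> E x z)"

text \<open>Maximal triangle-free: triangle-free, and adding any edge between two distinct
  non-adjacent vertices creates a triangle (i.e. they have a common neighbour).\<close>
definition mtf :: "'a set \<Rightarrow> ('a \<Rightarrow> 'a \<Rightarrow> bool) \<Rightarrow> bool" where
  "mtf V E \<longleftrightarrow> triangle_free V E \<and>
     (\<forall>x\<in>V. \<forall>y\<in>V. x \<noteq> y \<and> \<not> E x y \<longrightarrow> (\<exists>z\<in>V. E x z \<and> E z y))"

definition proper_colouring :: "'a set \<Rightarrow> ('a \<Rightarrow> 'a \<Rightarrow> bool) \<Rightarrow> nat \<Rightarrow> ('a \<Rightarrow> nat) \<Rightarrow> bool" where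
  "proper_colouring V E k c \<longleftrightarrow> (\<forall>x\<in>V. c x < k) \<and> (\<forall>x\<in>V. \<forall>y\<in>V. E x y \<longrightarrow> c x \<noteq> c y)"

definition chromatic_number :: "'a set \<Rightarrow> ('a \<Rightarrow> 'a \<Rightarrow> bool) \<Rightarrow> nat" where
  "chromatic_number V E = (LEAST k. \<exists>c. proper_colouring V E k c)"

end

theory Submission
  imports Defs
begin

text \<open>Every vertex u outside the closed neighbourhood of v is non-adjacent to v, so by
  maximality it has a neighbour in N(v), and deleting N(v) \<union> {v} lowers its degree.
  Removing the closed neighbourhood costs at most one colour: N(v) is independent since
  G is triangle-free, so it receives one new colour, and v, whose neighbours all lie in
  N(v), reuses any old colour.\<close>

lemma triangle_free_subset:
  "triangle_free V E \<Longrightarrow> W \<subseteq> V \<Longrightarrow> triangle_free W E"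
  unfolding triangle_free_def by blast

lemma degree_le_max_degree:
  "finite V \<Longrightarrow> u \<in> V \<Longrightarrow> degree V E u \<le> max_degree V E"
  unfolding max_degree_def by simp

lemma card_Diff_closed_neighbourhood:
  assumes "simple_graph V E" and "v \<in> V"
  shows "card (V - (neighbours V E v \<union> {v})) = card V - degree V E v - 1"
proof -
  have "finite V" and "v \<notin> neighbours V E v"
    using assms unfolding simple_graph_def neighbours_def by auto
  moreover have sub: "neighbours V E v \<union> {v} \<subseteq> V"
    using assms(2) unfolding neighbours_def by auto
  ultimately have "card (neighbours V E v \<union> {v}) = degree V E v + 1"
    unfolding degree_def using finite_subset by fastforce
  with card_Diff_subset[OF finite_subset[OF sub \<open>finite V\<close>] sub] show ?thesis
    by simp
qed

lemma degree_outside_closed_neighbourhood_less: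
  assumes "simple_graph V E" and "mtf V E" and "v \<in> V"
    and u: "u \<in> V - (neighbours V E v \<union> {v})"
  shows "degree (V - (neighbours V E v \<union> {v})) E u < degree V E u"
proof -
  have "finite V" and sym: "\<forall>x\<in>V. \<forall>y\<in>V. E x y \<longrightarrow> E y x"
    using assms(1) unfolding simple_graph_def by auto
  from u have "u \<in> V" "u \<noteq> v" "\<not> E v u" unfolding neighbours_def by auto
  have mx: "\<forall>x\<in>V. \<forall>y\<in>V. x \<noteq> y \<and> \<not> E x y \<longrightarrow> (\<exists>z\<in>V. E x z \<and> E z y)"
    using assms(2) unfolding mtf_def by simp
  obtain z where z: "z \<in> V" "E v z" "E z u"
    using mx[rule_format, OF assms(3) \<open>u \<in> V\<close>] \<open>u \<noteq> v\<close> \<open>\<not> E v u\<close> by auto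
  have "z \<in> neighbours V E u"
    using sym z \<open>u \<in> V\<close> unfolding neighbours_def by blast
  moreover have "z \<notin> neighbours (V - (neighbours V E v \<union> {v})) E u"
    using z unfolding neighbours_def by blast
  moreover have "neighbours (V - (neighbours V E v \<union> {v})) E u \<subseteq> neighbours V E u"
    unfolding neighbours_def by blast
  ultimately have "neighbours (V - (neighbours V E v \<union> {v})) E u \<subset> neighbours V E u"
    by blast
  moreover have "finite (neighbours V E u)"
    using \<open>finite V\<close> unfolding neighbours_def by simp
  ultimately show ?thesis
    unfolding degree_def by (rule psubset_card_mono[rotated])
qed

lemma proper_colouring_subset:
  "proper_colouring V E k c \<Longrightarrow> W \<subseteq> V \<Longrightarrow> proper_colouring W E k c"
  unfolding proper_colouring_def by blast

lemma proper_colouring_nonempty_pos: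
  "proper_colouring V E k c \<Longrightarrow> V \<noteq> {} \<Longrightarrow> 0 < k"
  unfolding proper_colouring_def by fastforce

lemma chromatic_number_le:
  "proper_colouring V E k c \<Longrightarrow> chromatic_number V E \<le> k"
  unfolding chromatic_number_def by (blast intro: Least_le)

lemma simple_graph_colourable:
  assumes "simple_graph V E"
  shows "\<exists>c. proper_colouring V E (card V) c"
proof -
  have "finite V" and irr: "\<forall>x\<in>V. \<not> E x x"
    using assms unfolding simple_graph_def by auto
  then obtain h where h: "bij_betw h V {0..<card V}"
    using ex_bij_betw_finite_nat by blast
  have "proper_colouring V E (card V) h"
    using h irr unfolding proper_colouring_def bij_betw_def inj_on_def by fastforce
  then show ?thesis by blast
qed

lemma proper_colouring_chromatic_number:
  assumes "simple_graph V E"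
  obtains c where "proper_colouring V E (chromatic_number V E) c"
proof -
  have "\<exists>k c. proper_colouring V E k c"
    using simple_graph_colourable[OF assms] by blast
  then show ?thesis
    using LeastI_ex[of "\<lambda>k. \<exists>c. proper_colouring V E k c"] that
    unfolding chromatic_number_def by blast
qed

lemma chromatic_number_mono:
  "simple_graph V E \<Longrightarrow> W \<subseteq> V \<Longrightarrow> chromatic_number W E \<le> chromatic_number V E"
  by (metis proper_colouring_chromatic_number proper_colouring_subset chromatic_number_le)

lemma chromatic_number_le_Suc_Diff_closed_neighbourhood:
  assumes "simple_graph V E" and "triangle_free V E" and "v \<in> V"
    and ne: "V - (neighbours V E v \<union> {v}) \<noteq> {}"
  shows "chromatic_number V E \<le> chromatic_number (V - (neighbours V E v \<union> {v})) E + 1"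
proof -
  define N where "N = neighbours V E v"
  define W where "W = V - (N \<union> {v})"
  define m where "m = chromatic_number W E"
  have "simple_graph W E"
    using assms(1) unfolding simple_graph_def W_def by auto
  then obtain c where c: "proper_colouring W E m c"
    unfolding m_def by (rule proper_colouring_chromatic_number)
  have "0 < m"
    using c ne proper_colouring_nonempty_pos unfolding W_def N_def by blast
  define c' where "c' = (\<lambda>x. if x \<in> N then m else if x = v then 0 else c x)"
  have "proper_colouring V E (m + 1) c'"
    unfolding proper_colouring_def
  proof (intro conjI ballI impI)
    fix x assume "x \<in> V"
    then show "c' x < m + 1"
      using c \<open>0 < m\<close> unfolding c'_def proper_colouring_def W_def
      by (auto simp: less_Suc_eq)
  next
    fix x y assume xy: "x \<in> V" "y \<in> V" "E x y"
    have "\<not> (x \<in> N \<and> y \<in> N)"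
      using assms(2,3) xy unfolding triangle_free_def N_def neighbours_def by blast
    moreover have "x = v \<longrightarrow> y \<in> N" "y = v \<longrightarrow> x \<in> N"
      using assms(1) xy unfolding simple_graph_def N_def neighbours_def by auto
    moreover have "x \<noteq> y"
      using assms(1) xy unfolding simple_graph_def by auto
    ultimately show "c' x \<noteq> c' y"
      using c xy \<open>0 < m\<close> unfolding c'_def proper_colouring_def W_def by auto
  qed
  then show ?thesis
    unfolding m_def W_def N_def by (rule chromatic_number_le)
qed

theorem proposition1:
  fixes V :: "'a set" and E :: "'a \<Rightarrow> 'a \<Rightarrow> bool" and n k d :: nat and v :: 'a
  assumes "simple_graph V E"
    and "mtf V E"
    and "card V = n"
    and "chromatic_number V E = k"
    and "max_degree V E = d"
    and "v \<in> V"
    and "degree V E v = d"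
  shows "let V' = V - (neighbours V E v \<union> {v}) in
           triangle_free V' E \<and> card V' = n - d - 1 \<and>
           (\<forall>u\<in>V'. degree V' E u \<le> d - 1) \<and>
           (V' \<noteq> {} \<longrightarrow> chromatic_number V' E = k - 1 \<or> chromatic_number V' E = k)"
proof -
  define V' where "V' = V - (neighbours V E v \<union> {v})"
  have "finite V" using assms(1) unfolding simple_graph_def by simp
  have tf: "triangle_free V E" using assms(2) unfolding mtf_def by simp
  have "V' \<subseteq> V" unfolding V'_def by blast
  have card: "card V' = n - d - 1"
    using card_Diff_closed_neighbourhood[OF assms(1,6)] assms(3,7) unfolding V'_def by simp
  have degree: "\<forall>u\<in>V'. degree V' E u \<le> d - 1"
  proof
    fix u assume "u \<in> V'"
    then have "degree V' E u < degree V E u"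
      unfolding V'_def by (rule degree_outside_closed_neighbourhood_less[OF assms(1,2,6)])
    moreover have "degree V E u \<le> d"
      using degree_le_max_degree[OF \<open>finite V\<close>] \<open>V' \<subseteq> V\<close> \<open>u \<in> V'\<close> assms(5) by blast
    ultimately show "degree V' E u \<le> d - 1" by simp
  qed
  have chromatic: "V' \<noteq> {} \<longrightarrow> chromatic_number V' E = k - 1 \<or> chromatic_number V' E = k"
  proof
    assume "V' \<noteq> {}"
    then have "k \<le> chromatic_number V' E + 1"
      using chromatic_number_le_Suc_Diff_closed_neighbourhood[OF assms(1) tf assms(6)] assms(4)
      unfolding V'_def by simp
    moreover have "chromatic_number V' E \<le> k"
      using chromatic_number_mono[OF assms(1) \<open>V' \<subseteq> V\<close>] assms(4) by simp
    ultimately show "chromatic_number V' E = k - 1 \<or> chromatic_number V' E = k" by linarith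
  qed
  show ?thesis
    unfolding Let_def V'_def[symmetric]
    by (intro conjI triangle_free_subset[OF tf \<open>V' \<subseteq> V\<close>] card degree chromatic)
qed

end
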